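(* Let $\mathcal{G},\mathcal{H}$ be hypergraphs on a common vertex set with $r=\mathrm{rank}(\mathcal{H})$. Then $\mathcal{G}=\mathrm{Tr}(\mathcal{H})$ if and only if all three of the following hold: (1) $\mathcal{G}\subseteq\mathrm{Tr}(\mathcal{H})$; (2) $\mathrm{Tr}(\mathcal{G})|_r\subseteq\mathcal{H}$; (3) $\mathrm{rank}(\mathrm{Tr}(\mathcal{G}))\le r$.
   Context: $\mathrm{rank}(\mathcal{H})$ is the maximum edge size. $\mathrm{Tr}(\mathcal{H})$ is the set of inclusion-wise minimal hitting sets of $\mathcal{H}$ (sets meeting every edge, minimal under inclusion). $\mathrm{Tr}(\mathcal{G})|_r$ is the set of minimal hitting sets of $\mathcal{G}$ with at most $r$ vertices. Hypergraphs need not be Sperner (an edge may contain another). *)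

theory Defs
  imports Main
begin

text \<open>A hypergraph on vertex set V is a set of edges, each a subset of V
  (edges may contain each other; the empty edge is allowed).\<close>

definition hypergraph :: "'a set \<Rightarrow> 'a set set \<Rightarrow> bool" where
  "hypergraph V H \<longleftrightarrow> (\<forall>e\<in>H. e \<subseteq> V)"

definition rank :: "'a set set \<Rightarrow> nat" where
  "rank H = (if H = {} then 0 else Max (card ` H))"

definition hitting_set :: "'a set \<Rightarrow> 'a set set \<Rightarrow> 'a set \<Rightarrow> bool" where
  "hitting_set V H T \<longleftrightarrow> T \<subseteq> V \<and> (\<forall>e\<in>H. T \<inter> e \<noteq> {})"

definition Tr :: "'a set \<Rightarrow> 'a set set \<Rightarrow> 'a set set" where
  "Tr V H = {T. hitting_set V H T \<and> (\<forall>S. S \<subset> T \<longrightarrow> \<not> hitting_set V H S)}"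

definition restrict_rank :: "'a set set \<Rightarrow> nat \<Rightarrow> 'a set set" where
  "restrict_rank H r = {e\<in>H. card e \<le> r}"

end

theory Submission
  imports Defs
begin

text \<open>The key fact is the duality between a hypergraph and its transversal:
  a set \<open>S \<subseteq> V\<close> that meets every minimal hitting set of \<open>H\<close> contains an edge
  of \<open>H\<close>, because otherwise \<open>V - S\<close> is a hitting set of \<open>H\<close> and contains a
  minimal one, which misses \<open>S\<close>. Hence \<open>Tr(Tr H) \<subseteq> H\<close>, which gives the forward
  direction. Conversely, condition (3) makes condition (2) say \<open>Tr G \<subseteq> H\<close>; if
  some \<open>T \<in> Tr H\<close> were not in \<open>G \<subseteq> Tr H\<close>, then no edge of \<open>G\<close> lies inside \<open>T\<close>
  (by minimality of \<open>T\<close>), so by duality some \<open>S \<in> Tr G \<subseteq> H\<close> misses \<open>T\<close>,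
  contradicting that \<open>T\<close> hits \<open>H\<close>.\<close>

lemma finite_hypergraph: "finite V \<Longrightarrow> hypergraph V H \<Longrightarrow> finite H"
  unfolding hypergraph_def by (metis Pow_iff finite_Pow_iff rev_finite_subset subsetI)

lemma hypergraph_Tr: "hypergraph V (Tr V H)"
  unfolding hypergraph_def Tr_def hitting_set_def by auto

lemma card_le_rank: "finite H \<Longrightarrow> e \<in> H \<Longrightarrow> card e \<le> rank H"
  unfolding rank_def by auto

lemma rank_le_iff: "finite H \<Longrightarrow> rank H \<le> r \<longleftrightarrow> (\<forall>e\<in>H. card e \<le> r)"
  unfolding rank_def by auto

lemma restrict_rank_eq_self: "finite H \<Longrightarrow> rank H \<le> r \<Longrightarrow> restrict_rank H r = H"
  unfolding restrict_rank_def by (auto simp: rank_le_iff)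

lemma hitting_set_contains_Tr:
  assumes "finite V" and "hitting_set V H X"
  shows "\<exists>T\<in>Tr V H. T \<subseteq> X"
  using assms(2)
proof (induction "card X" arbitrary: X rule: less_induct)
  case less
  show ?case
  proof (cases "\<exists>S. S \<subset> X \<and> hitting_set V H S")
    case True
    then obtain S where S: "S \<subset> X" "hitting_set V H S" by blast
    have "finite X"
      using less.prems assms(1) finite_subset unfolding hitting_set_def by blast
    then have "card S < card X" using S(1) psubset_card_mono by blast
    then obtain T where "T \<in> Tr V H" "T \<subseteq> S" using less.hyps S(2) by blast
    then show ?thesis using S(1) by blast
  next
    case False
    then show ?thesis using less.prems by (auto simp: Tr_def)
  qed
qed

lemma hitting_set_Diff:
  assumes "hypergraph V H" and "\<forall>e\<in>H. \<not> e \<subseteq> S"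
  shows "hitting_set V H (V - S)"
  unfolding hitting_set_def
proof (intro conjI ballI)
  fix e assume "e \<in> H"
  then have "e \<subseteq> V" "\<not> e \<subseteq> S" using assms unfolding hypergraph_def by auto
  then show "(V - S) \<inter> e \<noteq> {}" by blast
qed blast

lemma hitting_set_Tr_contains_edge:
  assumes "finite V" and "hypergraph V H" and "hitting_set V (Tr V H) S"
  shows "\<exists>e\<in>H. e \<subseteq> S"
proof (rule ccontr)
  assume "\<not> (\<exists>e\<in>H. e \<subseteq> S)"
  then have "hitting_set V H (V - S)" using hitting_set_Diff assms(2) by blast
  then obtain T where "T \<in> Tr V H" "T \<subseteq> V - S"
    using hitting_set_contains_Tr assms(1) by blast
  then show False using assms(3) unfolding hitting_set_def by blast
qed

lemma Tr_Tr_subset: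
  assumes "finite V" and "hypergraph V H"
  shows "Tr V (Tr V H) \<subseteq> H"
proof
  fix S assume S: "S \<in> Tr V (Tr V H)"
  then have hits: "hitting_set V (Tr V H) S" by (simp add: Tr_def)
  then obtain e where e: "e \<in> H" "e \<subseteq> S"
    using hitting_set_Tr_contains_edge assms by blast
  have "hitting_set V (Tr V H) e"
    using e(1) assms(2) unfolding Tr_def hitting_set_def hypergraph_def by blast
  then have "e = S" using S e(2) unfolding Tr_def by blast
  then show "S \<in> H" using e(1) by simp
qed

lemma eq_Tr_if_subset:
  assumes "finite V" and "hypergraph V G"
    and G_sub: "G \<subseteq> Tr V H" and Tr_G_sub: "Tr V G \<subseteq> H"
  shows "G = Tr V H"
proof (rule ccontr)
  assume "G \<noteq> Tr V H"
  then obtain T where T: "T \<in> Tr V H" "T \<notin> G" using G_sub by blast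
  then have T_hits: "hitting_set V H T"
    and T_min: "\<And>S. S \<subset> T \<Longrightarrow> \<not> hitting_set V H S"
    by (auto simp: Tr_def)
  have "\<not> hitting_set V (Tr V G) T"
  proof
    assume "hitting_set V (Tr V G) T"
    then obtain g where g: "g \<in> G" "g \<subseteq> T"
      using hitting_set_Tr_contains_edge assms(1,2) by blast
    then have "g \<subset> T" using T(2) by blast
    moreover have "hitting_set V H g" using g(1) G_sub by (auto simp: Tr_def)
    ultimately show False using T_min by blast
  qed
  moreover have "T \<subseteq> V" using T_hits by (simp add: hitting_set_def)
  ultimately obtain S where "S \<in> Tr V G" "T \<inter> S = {}"
    unfolding hitting_set_def by blast
  then show False using T_hits Tr_G_sub unfolding hitting_set_def by blast
qed

theorem lemma10:
  fixes V :: "'a set" and G H :: "'a set set"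
  assumes "finite V" and "hypergraph V G" and "hypergraph V H"
    and "r = rank H"
  shows "G = Tr V H \<longleftrightarrow>
           (G \<subseteq> Tr V H \<and> restrict_rank (Tr V G) r \<subseteq> H \<and> rank (Tr V G) \<le> r)"
proof
  assume G: "G = Tr V H"
  have Tr_G_sub: "Tr V G \<subseteq> H" using Tr_Tr_subset assms(1,3) G by blast
  have "finite H" using finite_hypergraph assms(1,3) .
  then have "rank (Tr V G) \<le> r"
    using Tr_G_sub card_le_rank finite_hypergraph[OF assms(1) hypergraph_Tr] assms(4)
    by (auto simp: rank_le_iff)
  with G Tr_G_sub show "G \<subseteq> Tr V H \<and> restrict_rank (Tr V G) r \<subseteq> H \<and> rank (Tr V G) \<le> r"
    unfolding restrict_rank_def by auto
next
  assume conds: "G \<subseteq> Tr V H \<and> restrict_rank (Tr V G) r \<subseteq> H \<and> rank (Tr V G) \<le> r"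
  then have "restrict_rank (Tr V G) r = Tr V G"
    using restrict_rank_eq_self finite_hypergraph[OF assms(1) hypergraph_Tr] by blast
  with conds have "Tr V G \<subseteq> H" by simp
  then show "G = Tr V H" using eq_Tr_if_subset assms(1,2) conds by blast
qed

end
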